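(* Let $\rho$ be a fixed density operator on a $d$-dimensional Hilbert space $\mathcal{H}$, and let $\mathcal{A}_0$ be an observable (Hermitian operator) on $\mathcal{H}$ that evolves in the Heisenberg picture according to $\frac{d\mathcal{A}_t}{dt}=\mathcal{L}_t^{\dagger}(\mathcal{A}_t)$, where $\mathcal{L}_t^{\dagger}$ is the adjoint of the Liouvillian super-operator of an arbitrary dynamics, with $\mathcal{A}_t$ differentiable in $t$. Then for every $T>0$, the time needed to go from skew information $I(\rho,\mathcal{A}_0)$ to $I(\rho,\mathcal{A}_T)$ satisfies $$T\ \geq\ T_Q=\frac{\sqrt{2}\,\bigl|\sqrt{I(\rho,\mathcal{A}_T)}-\sqrt{I(\rho,\mathcal{A}_0)}\bigr|}{2\,\langle\!\langle \lVert[\sqrt{\rho},\mathcal{L}_t^{\dagger}(\mathcal{A}_t)]\rVert_{\rm HS}\rangle\!\rangle_T}$$ (whenever the time average in the denominator is nonzero).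
   Context: The (Wigner–Yanase) skew information of an observable $\mathcal{A}$ in a state $\rho$ is $I(\rho,\mathcal{A})=\frac12\lVert[\sqrt{\rho},\mathcal{A}]\rVert_{\rm HS}^2$, where $[X,Y]=XY-YX$ and $\lVert O\rVert_{\rm HS}=\sqrt{\operatorname{tr}(O^\dagger O)}$. The Liouvillian $\mathcal{L}_t$ generates $\dot\rho_t=\mathcal{L}_t(\rho_t)$ and its adjoint $\mathcal{L}_t^\dagger$ is defined by $\operatorname{tr}(\mathcal{A}\,\mathcal{L}_t(\rho))=\operatorname{tr}(\mathcal{L}_t^\dagger(\mathcal{A})\rho)$. For a function $X_t$, $\langle\!\langle X_t\rangle\!\rangle_T=\frac{1}{T}\int_0^T X_t\,dt$. *)

theory Defs
  imports "HOL-Analysis.Analysis"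
begin

text \<open>Operators on a d-dimensional Hilbert space, d = CARD('n), are d x d complex
  matrices, represented as complex ^'n^'n (product is **).\<close>

definition adj :: "complex^'n^'n \<Rightarrow> complex^'n^'n" where
  "adj A = (\<chi> i j. cnj (A $ j $ i))"

definition hermitian :: "complex^'n^'n \<Rightarrow> bool" where
  "hermitian A \<longleftrightarrow> adj A = A"

definition psd :: "complex^('n::finite)^'n \<Rightarrow> bool" where
  "psd A \<longleftrightarrow> hermitian A \<and>
     (\<forall>x :: complex^'n. 0 \<le> (\<Sum>i\<in>UNIV. \<Sum>j\<in>UNIV. cnj (x $ i) * A $ i $ j * x $ j))"

definition mtrace :: "complex^('n::finite)^'n \<Rightarrow> complex" where
  "mtrace A = (\<Sum>i\<in>UNIV. A $ i $ i)"

definition density_op :: "complex^('n::finite)^'n \<Rightarrow> bool" where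
  "density_op \<rho> \<longleftrightarrow> psd \<rho> \<and> mtrace \<rho> = 1"

definition msqrt :: "complex^('n::finite)^'n \<Rightarrow> complex^'n^'n" where
  "msqrt A = (THE B. psd B \<and> B ** B = A)"

definition commutator :: "complex^('n::finite)^'n \<Rightarrow> complex^'n^'n \<Rightarrow> complex^'n^'n" where
  "commutator X Y = X ** Y - Y ** X"

definition hs_norm :: "complex^('n::finite)^'n \<Rightarrow> real" where
  "hs_norm X = sqrt (Re (mtrace (adj X ** X)))"

definition skew_info :: "complex^('n::finite)^'n \<Rightarrow> complex^'n^'n \<Rightarrow> real" where
  "skew_info \<rho> A = (1/2) * (hs_norm (commutator (msqrt \<rho>) A))^2"

definition time_avg :: "real \<Rightarrow> (real \<Rightarrow> real) \<Rightarrow> real" where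
  "time_avg T X = (1 / T) * integral {0..T} X"

definition mscale :: "complex \<Rightarrow> complex^('n::finite)^'n \<Rightarrow> complex^'n^'n" where
  "mscale c X = (\<chi> i j. c * X $ i $ j)"

end

theory Submission
  imports Defs
begin

text \<open>The Hilbert-Schmidt norm is the Euclidean norm of the matrix as a vector, so
  \<open>\<surd>(2 I(\<rho>,\<A>)) = \<parallel>[\<surd>\<rho>,\<A>]\<parallel>\<close>, and the commutator with \<open>\<surd>\<rho>\<close> is linear. Hence
  \<open>t \<mapsto> [\<surd>\<rho>,\<A>\<^sub>t]\<close> has derivative \<open>[\<surd>\<rho>,\<L>\<^sub>t\<^sup>\<dagger>(\<A>\<^sub>t)]\<close>, and by the reverse triangle inequality
  and the fundamental theorem of calculus the change of \<open>\<surd>(2 I)\<close> over \<open>[0,T]\<close> is at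
  most the integral of \<open>\<parallel>[\<surd>\<rho>,\<L>\<^sub>t\<^sup>\<dagger>(\<A>\<^sub>t)]\<parallel>\<close>.\<close>

lemma hs_norm_eq_norm: "hs_norm (X :: complex^('n::finite)^'n) = norm X"
proof -
  have "Re (mtrace (adj X ** X)) = (\<Sum>i\<in>UNIV. \<Sum>k\<in>UNIV. (cmod (X $ k $ i))^2)"
    unfolding mtrace_def adj_def matrix_matrix_mult_def
    by (simp add: Re_sum complex_mult_cnj cmod_def power2_eq_square)
  also have "\<dots> = (\<Sum>k\<in>UNIV. (norm (X $ k))^2)"
    by (subst sum.swap) (simp add: norm_vec_def L2_set_def sum_nonneg)
  finally show ?thesis
    by (simp add: hs_norm_def norm_vec_def L2_set_def)
qed

lemma sqrt_two_mult_sqrt_skew_info: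
  "sqrt 2 * sqrt (skew_info \<rho> X) = norm (commutator (msqrt \<rho>) X)"
  by (simp add: skew_info_def hs_norm_eq_norm real_sqrt_mult[symmetric])

lemma bounded_linear_commutator: "bounded_linear (commutator (S :: complex^('n::finite)^'n))"
proof -
  have "linear (commutator S)"
    by (rule linearI)
      (simp_all add: commutator_def vec_eq_iff matrix_matrix_mult_def
         sum_distrib_left sum.distrib algebra_simps scaleR_sum_right)
  then show ?thesis
    by (simp add: linear_conv_bounded_linear)
qed

lemma norm_diff_le_integral_norm_derivative:
  fixes f :: "real \<Rightarrow> 'a::banach"
  assumes "a \<le> b"
    and deriv: "\<And>t. t \<in> {a..b} \<Longrightarrow> (f has_vector_derivative f' t) (at t within {a..b})"
    and integ: "(\<lambda>t. norm (f' t)) integrable_on {a..b}"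
  shows "\<bar>norm (f b) - norm (f a)\<bar> \<le> integral {a..b} (\<lambda>t. norm (f' t))"
proof -
  have ftc: "(f' has_integral (f b - f a)) {a..b}"
    using fundamental_theorem_of_calculus[OF \<open>a \<le> b\<close>] deriv by blast
  have "\<bar>norm (f b) - norm (f a)\<bar> \<le> norm (f b - f a)"
    by (rule norm_triangle_ineq3)
  also have "\<dots> = norm (integral {a..b} f')"
    using ftc by (simp add: integral_unique)
  also have "\<dots> \<le> integral {a..b} (\<lambda>t. norm (f' t))"
    using ftc integ by (intro integral_norm_bound_integral) auto
  finally show ?thesis .
qed

lemma sqrt_skew_info_change_le_integral:
  fixes \<rho> :: "complex^('n::finite)^'n"
    and A A' :: "real \<Rightarrow> complex^'n^'n"
  assumes "T \<ge> 0"
    and "\<And>t. t \<in> {0..T} \<Longrightarrow> (A has_vector_derivative A' t) (at t within {0..T})"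
    and "(\<lambda>t. hs_norm (commutator (msqrt \<rho>) (A' t))) integrable_on {0..T}"
  shows "sqrt 2 * \<bar>sqrt (skew_info \<rho> (A T)) - sqrt (skew_info \<rho> (A 0))\<bar>
           \<le> integral {0..T} (\<lambda>t. hs_norm (commutator (msqrt \<rho>) (A' t)))"
proof -
  let ?C = "\<lambda>t. commutator (msqrt \<rho>) (A t)"
  have "\<And>t. t \<in> {0..T} \<Longrightarrow>
      (?C has_vector_derivative commutator (msqrt \<rho>) (A' t)) (at t within {0..T})"
    using bounded_linear.has_vector_derivative[OF bounded_linear_commutator] assms(2) .
  then have "\<bar>norm (?C T) - norm (?C 0)\<bar>
      \<le> integral {0..T} (\<lambda>t. norm (commutator (msqrt \<rho>) (A' t)))"
    using assms(1,3) by (intro norm_diff_le_integral_norm_derivative) (auto simp: hs_norm_eq_norm)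
  then show ?thesis
    by (simp add: sqrt_two_mult_sqrt_skew_info[symmetric] right_diff_distrib[symmetric]
        abs_mult hs_norm_eq_norm)
qed

theorem corollary2:
  fixes \<rho> :: "complex^('n::finite)^'n"
    and A :: "real \<Rightarrow> complex^'n^'n"
    and Ldag :: "real \<Rightarrow> complex^'n^'n \<Rightarrow> complex^'n^'n"
    and T :: real
  assumes rho: "density_op \<rho>"
    and herm0: "hermitian (A 0)"
    and lin: "\<And>t X Y c. Ldag t (X + Y) = Ldag t X + Ldag t Y \<and> Ldag t (mscale c X) = mscale c (Ldag t X)"
    and heis: "\<And>t. t \<in> {0..T} \<Longrightarrow> (A has_vector_derivative Ldag t (A t)) (at t within {0..T})"
    and Tpos: "T > 0"
    and integ: "(\<lambda>t. hs_norm (commutator (msqrt \<rho>) (Ldag t (A t)))) integrable_on {0..T}"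
    and nz: "time_avg T (\<lambda>t. hs_norm (commutator (msqrt \<rho>) (Ldag t (A t)))) \<noteq> 0"
  shows "T \<ge> sqrt 2 * \<bar>sqrt (skew_info \<rho> (A T)) - sqrt (skew_info \<rho> (A 0))\<bar>
               / (2 * time_avg T (\<lambda>t. hs_norm (commutator (msqrt \<rho>) (Ldag t (A t)))))"
proof -
  define G where "G = integral {0..T} (\<lambda>t. hs_norm (commutator (msqrt \<rho>) (Ldag t (A t))))"
  have change: "sqrt 2 * \<bar>sqrt (skew_info \<rho> (A T)) - sqrt (skew_info \<rho> (A 0))\<bar> \<le> G"
    unfolding G_def using Tpos heis integ by (intro sqrt_skew_info_change_le_integral) auto
  have "G \<ge> 0"
    unfolding G_def using integ by (intro integral_nonneg) (auto simp: hs_norm_eq_norm)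
  moreover have avg: "time_avg T (\<lambda>t. hs_norm (commutator (msqrt \<rho>) (Ldag t (A t)))) = G / T"
    by (simp add: time_avg_def G_def)
  ultimately have "G > 0"
    using nz by auto
  then show ?thesis
    unfolding avg using change Tpos by (simp add: field_simps)
qed

end
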